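(* Let $\mathbb{P}=(X,E,\mathscr{T})$ be a digraph with topology satisfying condition (TED): for all $x,y\in X$ with $(x,y)\notin E$ there exists $\varphi\in\mathrm{MPM}(\mathbb{P})$ with $\varphi(x)=1$ and $\varphi(y)=0$. Then $\mathbb{P}$ is doubly-disconnected, i.e. for all $x,y\in X$: (a) if $yE\not\subseteq xE$ then there is $\varphi\in\mathrm{MPM}(\mathbb{P})$ with $\varphi(x)=1$ and $\varphi(y)\neq 1$ (i.e. $\varphi(y)=0$ or $y\notin\mathrm{dom}\varphi$); (b) if $Ey\not\subseteq Ex$ then there is $\varphi\in\mathrm{MPM}(\mathbb{P})$ with $\varphi(x)=0$ and $\varphi(y)\ne 0$.
   Context: A digraph with topology is a triple $\mathbb{P}=(X,E,\mathscr{T})$ with $E\subseteq X\times X$ and $\mathscr{T}$ a topology on $X$. For $x\in X$: $xE=\{y: (x,y)\in E\}$, $Ex=\{y:(y,x)\in E\}$. Let $\underset{\sim}{2}_{\mathscr{T}}$ be the set $\{0,1\}$ with relation $\le$ and the discrete topology. A partial morphism $\mathbb{P}\to\underset{\sim}{2}_{\mathscr{T}}$ is a partial map $\varphi:X\to\{0,1\}$ whose domain is $\mathscr{T}$-closed, such that $\varphi(x)\le\varphi(y)$ whenever $x,y\in\mathrm{dom}\varphi$ and $(x,y)\in E$, and whose restriction to $\mathrm{dom}\varphi$ is continuous. A maximal partial morphism (MPM) is a partial morphism with no proper extension that is a partial morphism; $\mathrm{MPM}(\mathbb{P})$ denotes the set of all MPMs from $\mathbb{P}$ to $\underset{\sim}{2}_{\mathscr{T}}$.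 *)

theory Defs
  imports "HOL-Analysis.Analysis"
begin

definition digraph_top :: "'a set \<Rightarrow> ('a \<times> 'a) set \<Rightarrow> 'a topology \<Rightarrow> bool" where
  "digraph_top X E T \<longleftrightarrow> E \<subseteq> X \<times> X \<and> topspace T = X"

text \<open>A partial map X \<rightharpoonup> {0,1} is represented as a map 'a \<Rightarrow> nat option with domain
  contained in X and values in {0,1}.\<close>
definition partial_morphism :: "'a set \<Rightarrow> ('a \<times> 'a) set \<Rightarrow> 'a topology \<Rightarrow> ('a \<Rightarrow> nat option) \<Rightarrow> bool" where
  "partial_morphism X E T \<phi> \<longleftrightarrow>
     dom \<phi> \<subseteq> X \<and> ran \<phi> \<subseteq> {0, 1} \<and>
     closedin T (dom \<phi>) \<and>
     (\<forall>x y. x \<in> dom \<phi> \<longrightarrow> y \<in> dom \<phi> \<longrightarrow> (x, y) \<in> E \<longrightarrow> the (\<phi> x) \<le> the (\<phi> y)) \<and>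
     continuous_map (subtopology T (dom \<phi>)) (discrete_topology {0, 1}) (\<lambda>x. the (\<phi> x))"

definition MPM :: "'a set \<Rightarrow> ('a \<times> 'a) set \<Rightarrow> 'a topology \<Rightarrow> ('a \<Rightarrow> nat option) set" where
  "MPM X E T = {\<phi>. partial_morphism X E T \<phi> \<and>
      (\<forall>\<psi>. partial_morphism X E T \<psi> \<and> \<phi> \<subseteq>\<^sub>m \<psi> \<longrightarrow> \<psi> = \<phi>)}"

end

theory Submission
  imports Defs
begin

text \<open>If \<open>y\<close> has an out-neighbour \<open>z\<close> that is not an out-neighbour of \<open>x\<close>, then (TED) yields an
  MPM \<open>\<phi>\<close> with \<open>\<phi> x = 1\<close> and \<open>\<phi> z = 0\<close>; monotonicity along the edge \<open>(y, z)\<close> forbids \<open>\<phi> y = 1\<close>.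
  Part (b) is the dual argument with an in-neighbour of \<open>y\<close>.\<close>

lemma partial_morphism_edge_mono:
  assumes "partial_morphism X E T \<phi>" "(a, b) \<in> E" "\<phi> a = Some i" "\<phi> b = Some j"
  shows "i \<le> j"
proof -
  have "the (\<phi> a) \<le> the (\<phi> b)"
    using assms unfolding partial_morphism_def by blast
  with assms(3,4) show ?thesis by simp
qed

lemma MPM_separates_out_neighbourhoods:
  assumes "E \<subseteq> X \<times> X" "x \<in> X"
    and TED: "\<forall>x\<in>X. \<forall>y\<in>X. (x, y) \<notin> E \<longrightarrow> (\<exists>\<phi>\<in>MPM X E T. \<phi> x = Some 1 \<and> \<phi> y = Some 0)"
    and "\<not> E `` {y} \<subseteq> E `` {x}"
  shows "\<exists>\<phi>\<in>MPM X E T. \<phi> x = Some 1 \<and> \<phi> y \<noteq> Some 1"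
proof -
  obtain z where yz: "(y, z) \<in> E" and xz: "(x, z) \<notin> E"
    using assms(4) by auto
  with \<open>E \<subseteq> X \<times> X\<close> have "z \<in> X" by auto
  with TED \<open>x \<in> X\<close> xz obtain \<phi> where \<phi>: "\<phi> \<in> MPM X E T" "\<phi> x = Some 1" "\<phi> z = Some 0"
    by blast
  have "\<phi> y \<noteq> Some 1"
  proof
    assume "\<phi> y = Some 1"
    have "partial_morphism X E T \<phi>"
      using \<phi>(1) by (simp add: MPM_def)
    from partial_morphism_edge_mono[OF this yz \<open>\<phi> y = Some 1\<close> \<phi>(3)]
    show False by simp
  qed
  with \<phi> show ?thesis by blast
qed

lemma MPM_separates_in_neighbourhoods:
  assumes "E \<subseteq> X \<times> X" "x \<in> X"
    and TED: "\<forall>x\<in>X. \<forall>y\<in>X. (x, y) \<notin> E \<longrightarrow> (\<exists>\<phi>\<in>MPM X E T. \<phi> x = Some 1 \<and> \<phi> y = Some 0)"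
    and "\<not> converse E `` {y} \<subseteq> converse E `` {x}"
  shows "\<exists>\<phi>\<in>MPM X E T. \<phi> x = Some 0 \<and> \<phi> y \<noteq> Some 0"
proof -
  obtain z where zy: "(z, y) \<in> E" and zx: "(z, x) \<notin> E"
    using assms(4) by auto
  with \<open>E \<subseteq> X \<times> X\<close> have "z \<in> X" by auto
  with TED \<open>x \<in> X\<close> zx obtain \<phi> where \<phi>: "\<phi> \<in> MPM X E T" "\<phi> z = Some 1" "\<phi> x = Some 0"
    by blast
  have "\<phi> y \<noteq> Some 0"
  proof
    assume "\<phi> y = Some 0"
    have "partial_morphism X E T \<phi>"
      using \<phi>(1) by (simp add: MPM_def)
    from partial_morphism_edge_mono[OF this zy \<phi>(2) \<open>\<phi> y = Some 0\<close>]
    show False by simp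
  qed
  with \<phi> show ?thesis by blast
qed

theorem lemma3p3:
  fixes X :: "'a set" and E :: "('a \<times> 'a) set" and T :: "'a topology"
  assumes "digraph_top X E T"
    and TED: "\<forall>x\<in>X. \<forall>y\<in>X. (x, y) \<notin> E \<longrightarrow>
               (\<exists>\<phi>\<in>MPM X E T. \<phi> x = Some 1 \<and> \<phi> y = Some 0)"
  shows "\<forall>x\<in>X. \<forall>y\<in>X.
           (\<not> (E `` {y} \<subseteq> E `` {x}) \<longrightarrow> (\<exists>\<phi>\<in>MPM X E T. \<phi> x = Some 1 \<and> \<phi> y \<noteq> Some 1)) \<and>
           (\<not> (converse E `` {y} \<subseteq> converse E `` {x}) \<longrightarrow> (\<exists>\<phi>\<in>MPM X E T. \<phi> x = Some 0 \<and> \<phi> y \<noteq> Some 0))"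
proof (intro ballI conjI impI)
  fix x y
  assume "x \<in> X"
  have "E \<subseteq> X \<times> X"
    using assms(1) by (simp add: digraph_top_def)
  note separation = this \<open>x \<in> X\<close> TED
  show "\<exists>\<phi>\<in>MPM X E T. \<phi> x = Some 1 \<and> \<phi> y \<noteq> Some 1" if "\<not> E `` {y} \<subseteq> E `` {x}"
    using MPM_separates_out_neighbourhoods[OF separation that] .
  show "\<exists>\<phi>\<in>MPM X E T. \<phi> x = Some 0 \<and> \<phi> y \<noteq> Some 0" if "\<not> converse E `` {y} \<subseteq> converse E `` {x}"
    using MPM_separates_in_neighbourhoods[OF separation that] .
qed

end
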